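(* As $N\to\infty$, $$\frac{1}{N}\sum_{n\leq N}\log\frac{\sigma(n)}{n}=A+O\!\left(\frac{1}{\log N}\right),\qquad A=\sum_{p\ \mathrm{prime}}\alpha(p)\approx 0.4457,$$ where for a prime $p$ $$\alpha(p)=\left(1-\frac1p\right)\sum_{m\geq1}\frac{1}{p^m}\log\left(1+\frac1p+\cdots+\frac{1}{p^m}\right).$$
   Context: $\sigma(n)=\sum_{d\mid n}d$ denotes the sum-of-divisors function. *)

theory Defs
  imports "HOL-Analysis.Analysis" "HOL-Computational_Algebra.Primes" "HOL-Library.Landau_Symbols"
begin

definition divisor_sigma :: "nat \<Rightarrow> nat" where
  "divisor_sigma n = (\<Sum>d | d dvd n. d)"

definition alpha :: "nat \<Rightarrow> real" where
  "alpha p = (1 - 1 / real p) *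
     (\<Sum>m. (1 / real p ^ (Suc m)) * ln (\<Sum>j\<le>Suc m. 1 / real p ^ j))"

definition const_A :: real where
  "const_A = infsum alpha {p. prime p}"

end

theory Submission
  imports Defs "HOL-Real_Asymp.Real_Asymp"
begin

text \<open>
  The function sigma(n)/n is multiplicative and equals 1 + 1/p + ... + 1/p^v at p^v. Hence
  log(sigma(n)/n) is the sum, over the prime powers p^k (k >= 1) dividing n, of the increments
  d_p(k) = log(1 + ... + p^-k) - log(1 + ... + p^-(k-1)), and 0 <= d_p(k) <= p^-k.
  Summing over n <= N, the increment d_p(k) is counted floor(N/p^k) times, and replacing
  floor(N/p^k)/N by p^-k costs O(1/(pN)) per prime. Summation by parts gives
  alpha(p) = sum_k d_p(k) p^-k, whose truncation at k <= N is negligible, and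
  alpha(p) = O(1/p^2) makes the primes p > N contribute O(1/N). Since the sum of 1/p over p <= N
  is at most 1 + log N, the error is O(log N / N), which is stronger than claimed.
\<close>

lemma sum_power_atLeastAtMost_le:
  fixes y :: real
  assumes "0 \<le> y" "y \<le> 1/2"
  shows "(\<Sum>i=n..m. y ^ i) \<le> 2 * y ^ n"
proof (cases "n \<le> m")
  case True
  have "(1 - y) * (\<Sum>i=n..m. y ^ i) \<le> y ^ n"
    using sum_gp_multiplied[OF True, of y] assms by simp
  moreover have "0 \<le> (\<Sum>i=n..m. y ^ i)"
    using assms by (intro sum_nonneg) simp
  moreover have "2 * y * (\<Sum>i=n..m. y ^ i) \<le> (\<Sum>i=n..m. y ^ i)"
    using mult_right_mono[of "2 * y" 1] calculation(2) assms(2) by simp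
  ultimately show ?thesis by (simp add: algebra_simps)
qed (use assms in simp)

lemma sums_tail_le_power:
  fixes f :: "nat \<Rightarrow> real"
  assumes "f sums s" "0 \<le> y" "y \<le> 1/2" "\<And>k. 0 \<le> f k" "\<And>k. f k \<le> y ^ Suc k"
  shows "0 \<le> s - sum f {..<N}" "s - sum f {..<N} \<le> 2 * y ^ Suc N"
proof -
  have summable: "summable f" and s: "s = suminf f"
    using assms(1) by (auto simp: sums_iff)
  have tail: "s - sum f {..<N} = (\<Sum>k. f (k + N))"
    using suminf_split_initial_segment[OF summable, of N] s by simp
  show "0 \<le> s - sum f {..<N}"
    unfolding tail using assms(4) by (intro suminf_nonneg) (use summable_ignore_initial_segment[OF summable] in auto)
  have "(\<Sum>k<M. f (k + N)) \<le> 2 * y ^ Suc N" for M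
  proof -
    have "(\<Sum>k<M. f (k + N)) \<le> (\<Sum>k<M. y ^ (k + Suc N))"
      by (intro sum_mono) (use assms(5) in simp)
    also have "\<dots> = (\<Sum>i=Suc N..M + N. y ^ i)"
      by (rule sum.reindex_bij_witness[of _ "\<lambda>i. i - Suc N" "\<lambda>k. k + Suc N"]) auto
    also have "\<dots> \<le> 2 * y ^ Suc N"
      by (rule sum_power_atLeastAtMost_le) (use assms in auto)
    finally show ?thesis .
  qed
  then show "s - sum f {..<N} \<le> 2 * y ^ Suc N"
    unfolding tail by (intro suminf_le_const summable_ignore_initial_segment[OF summable])
qed

section \<open>The local factors alpha(p)\<close>

definition geo_sum :: "real \<Rightarrow> nat \<Rightarrow> real" where
  "geo_sum x m = (\<Sum>j\<le>m. x ^ j)"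

text \<open>ln_geo_sum_diff (1/p) k is the increment d_p(k+1) of the header.\<close>

definition ln_geo_sum_diff :: "real \<Rightarrow> nat \<Rightarrow> real" where
  "ln_geo_sum_diff x k = ln (geo_sum x (Suc k)) - ln (geo_sum x k)"

lemma geo_sum_0 [simp]: "geo_sum x 0 = 1"
  by (simp add: geo_sum_def)

lemma geo_sum_Suc: "geo_sum x (Suc m) = geo_sum x m + x ^ Suc m"
  by (simp add: geo_sum_def)

lemma geo_sum_ge_1: "0 \<le> x \<Longrightarrow> 1 \<le> geo_sum x m"
  unfolding geo_sum_def using member_le_sum[of 0 "{..m}" "\<lambda>j. x ^ j"] by simp

lemma geo_sum_le_2: "0 \<le> x \<Longrightarrow> x \<le> 1/2 \<Longrightarrow> geo_sum x m \<le> 2"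
  using sum_power_atLeastAtMost_le[of x 0 m] by (simp add: geo_sum_def atLeast0AtMost)

lemma ln_geo_sum_le_1:
  assumes "0 \<le> x" "x \<le> 1/2"
  shows "ln (geo_sum x m) \<le> 1"
proof -
  have "ln (geo_sum x m) \<le> geo_sum x m - 1"
    using geo_sum_ge_1[OF assms(1), of m] by (intro ln_le_minus_one) simp
  then show ?thesis
    using geo_sum_le_2[OF assms, of m] by linarith
qed

lemma ln_geo_sum_diff_nonneg:
  assumes "0 \<le> x"
  shows "0 \<le> ln_geo_sum_diff x k"
proof -
  have "0 < geo_sum x k" "0 \<le> x ^ Suc k"
    using geo_sum_ge_1[OF assms, of k] assms by auto
  then show ?thesis
    unfolding ln_geo_sum_diff_def geo_sum_Suc by simp
qed

lemma ln_geo_sum_diff_le: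
  assumes "0 \<le> x"
  shows "ln_geo_sum_diff x k \<le> x ^ Suc k"
proof -
  have ge1: "1 \<le> geo_sum x k" by (rule geo_sum_ge_1[OF assms])
  have "ln_geo_sum_diff x k = ln (geo_sum x (Suc k) / geo_sum x k)"
    using ge1 geo_sum_ge_1[OF assms, of "Suc k"] by (simp add: ln_geo_sum_diff_def ln_div)
  also have "\<dots> = ln (1 + x ^ Suc k / geo_sum x k)"
    using ge1 by (simp add: geo_sum_Suc field_simps)
  also have "\<dots> \<le> x ^ Suc k / geo_sum x k"
    using assms ge1 by (intro ln_add_one_self_le_self) simp
  also have "\<dots> \<le> x ^ Suc k"
    using divide_left_mono[OF ge1, of "x ^ Suc k"] assms ge1 by simp
  finally show ?thesis .
qed

lemma power_mult_sum_by_parts: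
  fixes x :: real and g :: "nat \<Rightarrow> real"
  assumes "g 0 = 0"
  shows "(1 - x) * (\<Sum>m<M. x ^ Suc m * g (Suc m))
     = (\<Sum>m<M. x ^ Suc m * (g (Suc m) - g m)) - x ^ Suc M * g M"
  by (induction M) (simp_all add: assms algebra_simps)

text \<open>Summation by parts turns the defining series of alpha(p) into the series of increments;
  the boundary term p^-(M+1) log(1 + ... + p^-M) tends to 0.\<close>

lemma alpha_sums:
  assumes "2 \<le> p"
  shows "(\<lambda>k. (1 / real p) ^ Suc k * ln_geo_sum_diff (1 / real p) k) sums alpha p"
proof -
  define x where "x = 1 / real p"
  define g where "g m = ln (geo_sum x m)" for m
  have x: "0 \<le> x" "x \<le> 1/2"
    using assms by (auto simp: x_def field_simps)
  have g: "0 \<le> g m" "g m \<le> 1" for m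
    using geo_sum_ge_1[OF x(1)] ln_geo_sum_le_1[OF x] by (auto simp: g_def)
  have geometric: "summable (\<lambda>m. x ^ Suc m)"
    by (subst summable_Suc_iff) (rule summable_geometric, use x in auto)
  have "summable (\<lambda>m. x ^ Suc m * g (Suc m))"
    by (rule summable_comparison_test'[OF geometric]) (use x g in \<open>auto intro: mult_left_le\<close>)
  moreover have "alpha p = (1 - x) * (\<Sum>m. x ^ Suc m * g (Suc m))"
    by (simp add: alpha_def x_def g_def geo_sum_def power_one_over)
  ultimately have "(\<lambda>M. (1 - x) * (\<Sum>m<M. x ^ Suc m * g (Suc m))) \<longlonglongrightarrow> alpha p"
    by (simp add: tendsto_mult_left summable_LIMSEQ)
  moreover have "(\<lambda>M. x ^ Suc M * g M) \<longlonglongrightarrow> 0"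
  proof (rule Lim_null_comparison)
    show "\<forall>\<^sub>F M in sequentially. norm (x ^ Suc M * g M) \<le> x ^ Suc M"
      using x g by (intro always_eventually allI) (simp add: mult_left_le)
    show "(\<lambda>M. x ^ Suc M) \<longlonglongrightarrow> 0"
      using geometric by (rule summable_LIMSEQ_zero)
  qed
  ultimately have "(\<lambda>M. (1 - x) * (\<Sum>m<M. x ^ Suc m * g (Suc m)) + x ^ Suc M * g M)
      \<longlonglongrightarrow> alpha p + 0"
    by (rule tendsto_add)
  then show ?thesis
    unfolding sums_def power_mult_sum_by_parts[of g, OF g_def[of 0, simplified]]
    by (simp add: ln_geo_sum_diff_def g_def x_def)
qed

lemma alpha_minus_partial_sum:
  assumes "2 \<le> p"
  defines "f \<equiv> \<lambda>k. (1 / real p) ^ Suc k * ln_geo_sum_diff (1 / real p) k"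
  shows "0 \<le> alpha p - sum f {..<N}" "alpha p - sum f {..<N} \<le> 2 * ((1 / real p) ^ 2) ^ Suc N"
proof -
  have x: "0 \<le> 1 / real p" "1 / real p \<le> 1/2"
    using assms by (auto simp: field_simps)
  have "f k \<le> ((1 / real p) ^ 2) ^ Suc k" for k
  proof -
    have "f k \<le> (1 / real p) ^ Suc k * (1 / real p) ^ Suc k"
      unfolding f_def using ln_geo_sum_diff_le[OF x(1)] x by (intro mult_left_mono) auto
    then show ?thesis by (simp only: power2_eq_square power_mult_distrib)
  qed
  moreover have "f sums alpha p"
    unfolding f_def by (rule alpha_sums[OF assms(1)])
  moreover have "0 \<le> f k" for k
    unfolding f_def using ln_geo_sum_diff_nonneg[OF x(1)] x by simp
  moreover have "(1 / real p) ^ 2 \<le> 1/2"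
    using x power_mono[OF x(2), of 2] by (simp add: power2_eq_square)
  ultimately show "0 \<le> alpha p - sum f {..<N}" "alpha p - sum f {..<N} \<le> 2 * ((1 / real p) ^ 2) ^ Suc N"
    using sums_tail_le_power[of f "alpha p" "(1 / real p) ^ 2"] by auto
qed

lemma alpha_nonneg: "2 \<le> p \<Longrightarrow> 0 \<le> alpha p"
  using alpha_minus_partial_sum(1)[of p 0] by simp

lemma alpha_le: "2 \<le> p \<Longrightarrow> alpha p \<le> 2 / real p ^ 2"
  using alpha_minus_partial_sum(2)[of p 0] by (simp add: power_one_over)

lemma sum_inverse_squares_greaterThan_le:
  assumes "1 \<le> N" "finite F" "F \<subseteq> {N<..}"
  shows "(\<Sum>n\<in>F. 1 / real n ^ 2) \<le> 1 / real N"
proof -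
  obtain k where "F \<subseteq> {..<k}"
    using finite_nat_bounded[OF assms(2)] by blast
  define M where "M = max k N"
  have "F \<subseteq> {N<..M}"
    using assms(3) \<open>F \<subseteq> {..<k}\<close> by (force simp: M_def)
  then have "(\<Sum>n\<in>F. 1 / real n ^ 2) \<le> (\<Sum>n\<in>{N<..M}. 1 / real n ^ 2)"
    by (intro sum_mono2) auto
  also have "\<dots> = (\<Sum>i=N..<M. 1 / real (Suc i) ^ 2)"
    by (rule sum.reindex_bij_witness[of _ Suc "\<lambda>n. n - 1"]) auto
  also have "\<dots> \<le> (\<Sum>i=N..<M. 1 / real i - 1 / real (Suc i))"
  proof (rule sum_mono)
    fix i assume "i \<in> {N..<M}"
    then have "0 < real i" using assms(1) by simp
    then have "1 / real i - 1 / real (Suc i) = 1 / (real i * real (Suc i))"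
      by (simp add: field_simps)
    moreover have "1 / real (Suc i) ^ 2 \<le> 1 / (real i * real (Suc i))"
      using \<open>0 < real i\<close> by (intro divide_left_mono) (simp_all add: power2_eq_square)
    ultimately show "1 / real (Suc i) ^ 2 \<le> 1 / real i - 1 / real (Suc i)"
      by simp
  qed
  also have "\<dots> = 1 / real N - 1 / real M"
    using sum_Suc_diff'[of N M "\<lambda>i. - 1 / real i"] by (simp add: M_def)
  also have "\<dots> \<le> 1 / real N"
    by simp
  finally show ?thesis .
qed

lemma sum_alpha_primes_greaterThan_le:
  assumes "1 \<le> N" "finite F" "F \<subseteq> {p. prime p \<and> N < p}"
  shows "sum alpha F \<le> 2 / real N"
proof -
  have "sum alpha F \<le> (\<Sum>p\<in>F. 2 * (1 / real p ^ 2))"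
  proof (rule sum_mono)
    fix p assume "p \<in> F"
    then have "2 \<le> p"
      using assms(3) prime_ge_2_nat by blast
    then show "alpha p \<le> 2 * (1 / real p ^ 2)"
      using alpha_le by simp
  qed
  also have "\<dots> \<le> 2 * (1 / real N)"
  proof -
    have "F \<subseteq> {N<..}"
      using assms(3) by blast
    then show ?thesis
      unfolding sum_distrib_left[symmetric]
      using sum_inverse_squares_greaterThan_le[OF assms(1,2)] by simp
  qed
  finally show ?thesis by simp
qed

lemma alpha_summable_on_primes: "alpha summable_on {p. prime p}"
proof (rule nonneg_bdd_above_summable_on)
  show "0 \<le> alpha p" if "p \<in> {p. prime p}" for p
    using that alpha_nonneg prime_ge_2_nat by auto
  show "bdd_above (sum alpha ` {F. F \<subseteq> {p. prime p} \<and> finite F})"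
  proof (rule bdd_aboveI[where M = 2])
    fix y assume "y \<in> sum alpha ` {F. F \<subseteq> {p. prime p} \<and> finite F}"
    then obtain F where F: "F \<subseteq> {p. prime p}" "finite F" "y = sum alpha F"
      by blast
    then have "F \<subseteq> {p. prime p \<and> 1 < p}"
      using prime_gt_1_nat by blast
    then show "y \<le> 2"
      using sum_alpha_primes_greaterThan_le[of 1 F] F by simp
  qed
qed

lemma const_A_eq_sum_plus_tail:
  "const_A = (\<Sum>p | prime p \<and> p \<le> N. alpha p) + infsum alpha {p. prime p \<and> N < p}"
proof -
  have primes: "{p. prime p} = {p. prime p \<and> p \<le> N} \<union> {p. prime p \<and> N < p}"
    by auto
  have tail: "alpha summable_on {p. prime p \<and> N < p}"
    by (rule summable_on_subset_banach[OF alpha_summable_on_primes]) auto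
  have "const_A = infsum alpha {p. prime p \<and> p \<le> N} + infsum alpha {p. prime p \<and> N < p}"
    unfolding const_A_def primes
    by (rule infsum_Un_disjoint) (use tail in \<open>auto intro: summable_on_finite\<close>)
  then show ?thesis
    by simp
qed

lemma infsum_alpha_primes_greaterThan:
  assumes "1 \<le> N"
  shows "0 \<le> infsum alpha {p. prime p \<and> N < p}" "infsum alpha {p. prime p \<and> N < p} \<le> 2 / real N"
proof -
  show "0 \<le> infsum alpha {p. prime p \<and> N < p}"
    using alpha_nonneg prime_ge_2_nat by (intro infsum_nonneg) auto
  show "infsum alpha {p. prime p \<and> N < p} \<le> 2 / real N"
  proof (rule infsum_le_finite_sums)
    show "alpha summable_on {p. prime p \<and> N < p}"
      by (rule summable_on_subset_banach[OF alpha_summable_on_primes]) auto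
  qed (rule sum_alpha_primes_greaterThan_le[OF assms])
qed

section \<open>The summatory function of log(sigma(n)/n)\<close>

lemma divisor_sigma_mult:
  assumes "coprime a b" "0 < a" "0 < b"
  shows "divisor_sigma (a * b) = divisor_sigma a * divisor_sigma b"
proof -
  let ?A = "{d. d dvd a}" and ?B = "{d. d dvd b}"
  have factor: "gcd a (x * y) = x" "gcd b (x * y) = y" if "x dvd a" "y dvd b" for x y
  proof -
    have "coprime a y" "coprime b x"
      using coprime_divisors[OF dvd_refl that(2) assms(1)] coprime_divisors[OF that(1) dvd_refl assms(1)]
      by (simp_all add: coprime_commute)
    then show "gcd a (x * y) = x" "gcd b (x * y) = y"
      using that by (simp_all add: gcd_mult_right_right_cancel gcd_mult_right_left_cancel gcd_nat.absorb2)
  qed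
  have "inj_on (\<lambda>(x, y). x * y) (?A \<times> ?B)"
    by (rule inj_onI) (clarsimp, metis factor)
  moreover have "(\<lambda>(x, y). x * y) ` (?A \<times> ?B) = {d. d dvd a * b}"
    by (auto simp: mult_dvd_mono dest: division_decomp)
  ultimately have "divisor_sigma (a * b) = (\<Sum>(x, y)\<in>?A \<times> ?B. x * y)"
    unfolding divisor_sigma_def by (metis (no_types, lifting) sum.reindex_cong)
  also have "\<dots> = divisor_sigma a * divisor_sigma b"
    by (simp add: divisor_sigma_def sum_product sum.cartesian_product)
  finally show ?thesis .
qed

lemma divisor_sigma_prime_power:
  assumes "prime p"
  shows "divisor_sigma (p ^ v) = (\<Sum>i\<le>v. p ^ i)"
proof -
  have "{d. d dvd p ^ v} = (\<lambda>i. p ^ i) ` {..v}"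
    using divides_primepow_nat[OF assms] by auto
  moreover have "inj_on (\<lambda>i. p ^ i) {..v}"
    using prime_gt_1_nat[OF assms] by (auto intro!: inj_onI simp: power_inject_exp)
  ultimately show ?thesis
    by (simp add: divisor_sigma_def sum.reindex)
qed

lemma divisor_sigma_prime_power_ratio:
  assumes "prime p"
  shows "real (divisor_sigma (p ^ v)) / real p ^ v = geo_sum (1 / real p) v"
proof -
  have "0 < real p"
    using prime_gt_0_nat[OF assms] by simp
  have "real (divisor_sigma (p ^ v)) / real p ^ v = (\<Sum>i\<le>v. (1 / real p) ^ (v - i))"
    unfolding divisor_sigma_prime_power[OF assms] of_nat_sum sum_divide_distrib
    using \<open>0 < real p\<close> by (intro sum.cong refl) (simp add: power_diff power_one_over)
  also have "\<dots> = geo_sum (1 / real p) v"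
    unfolding geo_sum_def by (rule sum.reindex_bij_witness[of _ "\<lambda>j. v - j" "\<lambda>i. v - i"]) auto
  finally show ?thesis .
qed

lemma multiplicative_prod_prime_powers:
  fixes f :: "nat \<Rightarrow> 'a :: comm_monoid_mult"
  assumes "f 1 = 1" "\<And>a b. coprime a b \<Longrightarrow> 0 < a \<Longrightarrow> 0 < b \<Longrightarrow> f (a * b) = f a * f b"
    and "finite P" "P \<subseteq> {p. prime p}"
  shows "f (\<Prod>p\<in>P. p ^ e p) = (\<Prod>p\<in>P. f (p ^ e p))"
  using assms(3,4)
proof (induction P rule: finite_induct)
  case (insert q P)
  have "coprime q p" if "p \<in> P" for p
    using insert that by (intro primes_coprime) auto
  then have "coprime (q ^ e q) (\<Prod>p\<in>P. p ^ e p)"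
    by (intro prod_coprime_right) simp
  moreover have "0 < (\<Prod>p\<in>P. p ^ e p)" "0 < q ^ e q"
    using insert by (auto simp: prime_gt_0_nat intro!: prod_pos)
  ultimately show ?case
    using insert by (simp add: assms(2))
qed (use assms(1) in simp)

lemma ln_sigma_ratio_eq_sum:
  assumes "0 < n" "finite P" "P \<subseteq> {p. prime p}" "prime_factors n \<subseteq> P"
  shows "ln (real (divisor_sigma n) / real n) = (\<Sum>p\<in>P. ln (geo_sum (1 / real p) (multiplicity p n)))"
proof -
  define f where "f m = real (divisor_sigma m) / real m" for m
  have "n = (\<Prod>p\<in>prime_factors n. p ^ multiplicity p n)"
    using prod_prime_factors[of n] assms(1) by simp
  also have "\<dots> = (\<Prod>p\<in>P. p ^ multiplicity p n)"
  proof (rule prod.mono_neutral_left)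
    show "\<forall>p\<in>P - prime_factors n. p ^ multiplicity p n = 1"
      using assms(1,3) by (auto simp: in_prime_factors_iff not_dvd_imp_multiplicity_0)
  qed (use assms in auto)
  finally have "f n = f (\<Prod>p\<in>P. p ^ multiplicity p n)"
    by (rule arg_cong)
  also have "\<dots> = (\<Prod>p\<in>P. f (p ^ multiplicity p n))"
  proof (rule multiplicative_prod_prime_powers[OF _ _ assms(2,3)])
    show "f 1 = 1"
      by (simp add: f_def divisor_sigma_def)
    show "f (a * b) = f a * f b" if "coprime a b" "0 < a" "0 < b" for a b
      using that by (simp add: f_def divisor_sigma_mult)
  qed
  also have "\<dots> = (\<Prod>p\<in>P. geo_sum (1 / real p) (multiplicity p n))"
    using assms(3) by (intro prod.cong refl) (auto simp: f_def divisor_sigma_prime_power_ratio)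
  moreover have "geo_sum (1 / real p) (multiplicity p n) \<noteq> 0" for p
    using geo_sum_ge_1[of "1 / real p" "multiplicity p n"] by simp
  ultimately show ?thesis
    unfolding f_def using assms(2) by (simp add: ln_prod)
qed

text \<open>If p^(k+1) divides some n with 0 < n <= N then k < N, so truncating the telescoping sum
  at N makes its range independent of n and allows swapping it with the sum over n <= N.\<close>

lemma ln_geo_sum_multiplicity_eq:
  assumes "prime p" "0 < n" "n \<le> N"
  shows "ln (geo_sum (1 / real p) (multiplicity p n))
       = (\<Sum>k<N. if p ^ Suc k dvd n then ln_geo_sum_diff (1 / real p) k else 0)"
proof -
  define v where "v = multiplicity p n"
  have "n < p ^ Suc N"
  proof -
    have "N < 2 ^ Suc N"
      using less_exp[of "Suc N"] by simp
    also have "\<dots> \<le> p ^ Suc N"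
      using prime_ge_2_nat[OF assms(1)] by (rule power_mono) simp
    finally show ?thesis
      using assms(3) by simp
  qed
  then have "\<not> p ^ Suc N dvd n"
    using assms(2) by (auto dest: dvd_imp_le)
  then have "v \<le> N"
    unfolding v_def using multiplicity_lessI[of n p "Suc N"] assms(1,2) not_prime_unit
    by fastforce
  have "p ^ Suc k dvd n \<longleftrightarrow> k \<in> {..<v}" for k
    unfolding v_def using assms power_dvd_iff_le_multiplicity[where p = p and n = "Suc k" and x = n]
      prime_gt_1_nat[OF assms(1)] by (auto simp: not_prime_unit simp del: power_Suc)
  then have "(\<Sum>k<N. if p ^ Suc k dvd n then ln_geo_sum_diff (1 / real p) k else 0)
      = (\<Sum>k\<in>{..<N} \<inter> {..<v}. ln_geo_sum_diff (1 / real p) k)"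
    by (simp add: sum.inter_restrict)
  also have "\<dots> = ln (geo_sum (1 / real p) v)"
    using \<open>v \<le> N\<close> sum_lessThan_telescope[of "\<lambda>k. ln (geo_sum (1 / real p) k)" v]
    by (simp add: Int_absorb1 ln_geo_sum_diff_def)
  finally show ?thesis
    by (simp add: v_def)
qed

lemma card_multiples_atLeastAtMost: "card {n \<in> {1..N}. q dvd n} = N div q"
proof (induction N)
  case (Suc N)
  have "{n \<in> {1..Suc N}. q dvd n} = {n \<in> {1..N}. q dvd n} \<union> (if q dvd Suc N then {Suc N} else {})"
    by (auto simp: le_Suc_eq)
  then show ?case
    using Suc by (simp add: div_Suc dvd_eq_mod_eq_0)
qed simp

lemma sum_ln_sigma_ratio_eq:
  "(\<Sum>n=1..N. ln (real (divisor_sigma n) / real n))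
     = (\<Sum>p | prime p \<and> p \<le> N. \<Sum>k<N. ln_geo_sum_diff (1 / real p) k * real (N div p ^ Suc k))"
proof -
  let ?P = "{p. prime p \<and> p \<le> N}"
  let ?d = "\<lambda>p k. ln_geo_sum_diff (1 / real p) k"
  have "(\<Sum>n=1..N. ln (real (divisor_sigma n) / real n))
      = (\<Sum>n=1..N. \<Sum>p\<in>?P. \<Sum>k<N. if p ^ Suc k dvd n then ?d p k else 0)"
  proof (rule sum.cong[OF refl])
    fix n assume n: "n \<in> {1..N}"
    have "prime_factors n \<subseteq> ?P"
      using n by (auto simp: in_prime_factors_iff intro: order.trans[OF dvd_imp_le])
    then have "ln (real (divisor_sigma n) / real n) = (\<Sum>p\<in>?P. ln (geo_sum (1 / real p) (multiplicity p n)))"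
      using n by (intro ln_sigma_ratio_eq_sum) auto
    also have "\<dots> = (\<Sum>p\<in>?P. \<Sum>k<N. if p ^ Suc k dvd n then ?d p k else 0)"
      using n by (intro sum.cong refl ln_geo_sum_multiplicity_eq) auto
    finally show "ln (real (divisor_sigma n) / real n) = \<dots>" .
  qed
  also have "\<dots> = (\<Sum>p\<in>?P. \<Sum>k<N. \<Sum>n=1..N. if p ^ Suc k dvd n then ?d p k else 0)"
    by (subst sum.swap) (simp add: sum.swap[of _ "{..<N}"])
  also have "\<dots> = (\<Sum>p\<in>?P. \<Sum>k<N. ?d p k * real (N div p ^ Suc k))"
    by (simp only: sum.inter_filter[symmetric, OF finite_atLeastAtMost] sum_constant
        card_multiples_atLeastAtMost mult.commute)
  finally show ?thesis .
qed

section \<open>The error term\<close>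

lemma floor_quotient_approx:
  assumes "0 < N"
  shows "0 \<le> 1 / real q - real (N div q) / real N" "1 / real q - real (N div q) / real N \<le> 1 / real N"
proof -
  have floor: "real (N div q) = of_int \<lfloor>real N / real q\<rfloor>"
    by (simp add: floor_divide_of_nat_eq)
  have "real (N div q) \<le> real N / real q"
    unfolding floor by (rule of_int_floor_le)
  then show "0 \<le> 1 / real q - real (N div q) / real N"
    using assms by (simp add: field_simps)
  have "real N / real q - 1 \<le> real (N div q)"
    unfolding floor by linarith
  then have "(real N / real q - 1) / real N \<le> real (N div q) / real N"
    by (rule divide_right_mono) simp
  moreover have "(real N / real q - 1) / real N = 1 / real q - 1 / real N"
    using assms by (cases "q = 0") (simp_all add: field_simps)
  ultimately show "1 / real q - real (N div q) / real N \<le> 1 / real N"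
    by linarith
qed

lemma weighted_floor_sum_approx:
  fixes d :: "nat \<Rightarrow> real"
  assumes "2 \<le> p" "0 < N" "\<And>k. 0 \<le> d k" "\<And>k. d k \<le> (1 / real p) ^ Suc k"
  shows "\<bar>(\<Sum>k<K. d k * real (N div p ^ Suc k)) / real N - (\<Sum>k<K. (1 / real p) ^ Suc k * d k)\<bar>
           \<le> 2 / (real p * real N)"
proof -
  define x where "x = 1 / real p"
  define e where "e k = x ^ Suc k - real (N div p ^ Suc k) / real N" for k
  have x: "0 \<le> x" "x \<le> 1/2"
    using assms(1) by (auto simp: x_def field_simps)
  have e: "0 \<le> e k" "e k \<le> 1 / real N" for k
    using floor_quotient_approx[OF assms(2), of "p ^ Suc k"] by (simp_all add: e_def x_def power_one_over)
  have diff: "(\<Sum>k<K. x ^ Suc k * d k) - (\<Sum>k<K. d k * real (N div p ^ Suc k)) / real N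
      = (\<Sum>k<K. d k * e k)"
    by (simp add: e_def sum_divide_distrib sum_subtractf[symmetric] algebra_simps)
  have "(\<Sum>k<K. d k * e k) \<le> (\<Sum>k<K. x ^ Suc k * (1 / real N))"
    using assms(3,4) e by (intro sum_mono mult_mono) (auto simp: x_def)
  also have "\<dots> = (\<Sum>i=1..K. x ^ i) / real N"
    unfolding sum_divide_distrib by (rule sum.reindex_bij_witness[of _ "\<lambda>i. i - 1" Suc]) auto
  also have "\<dots> \<le> 2 * x / real N"
    using sum_power_atLeastAtMost_le[OF x, of 1 K] assms(2) by (simp add: divide_right_mono)
  finally have "(\<Sum>k<K. d k * e k) \<le> 2 / (real p * real N)"
    by (simp add: x_def)
  moreover have "0 \<le> (\<Sum>k<K. d k * e k)"
    using assms(3) e by (intro sum_nonneg) simp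
  ultimately show ?thesis
    using diff unfolding x_def by linarith
qed

lemma alpha_minus_partial_sum_abs_le:
  assumes "2 \<le> p" "0 < N"
  shows "\<bar>alpha p - (\<Sum>k<N. (1 / real p) ^ Suc k * ln_geo_sum_diff (1 / real p) k)\<bar>
           \<le> 2 / (real p * real N)"
proof -
  define x where "x = 1 / real p"
  have x: "0 \<le> x" "x \<le> 1"
    using assms(1) by (auto simp: x_def)
  have "real N \<le> 2 ^ N"
    using less_exp[of N] by (simp add: of_nat_less_numeral_power_cancel_iff less_imp_le)
  also have "\<dots> \<le> real p ^ N"
    using assms(1) by (intro power_mono) auto
  finally have "x ^ N \<le> 1 / real N"
    using assms by (simp add: x_def power_one_over frac_le)
  have "(x ^ 2) ^ Suc N \<le> x ^ Suc N"
    using x by (intro power_mono) (auto simp: power2_eq_square intro: mult_left_le)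
  also have "\<dots> \<le> x * (1 / real N)"
    using mult_left_mono[OF \<open>x ^ N \<le> 1 / real N\<close> x(1)] by simp
  finally show ?thesis
    using alpha_minus_partial_sum[OF assms(1), of N] unfolding x_def by simp
qed

lemma prime_contribution_approx:
  assumes "2 \<le> p" "0 < N"
  shows "\<bar>(\<Sum>k<N. ln_geo_sum_diff (1 / real p) k * real (N div p ^ Suc k)) / real N - alpha p\<bar>
           \<le> 4 / (real p * real N)"
proof -
  have "0 \<le> 1 / real p"
    by simp
  then have "\<bar>(\<Sum>k<N. ln_geo_sum_diff (1 / real p) k * real (N div p ^ Suc k)) / real N
      - (\<Sum>k<N. (1 / real p) ^ Suc k * ln_geo_sum_diff (1 / real p) k)\<bar> \<le> 2 / (real p * real N)"
    by (intro weighted_floor_sum_approx assms ln_geo_sum_diff_nonneg ln_geo_sum_diff_le)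
  moreover have "4 / (real p * real N) = 2 / (real p * real N) + 2 / (real p * real N)"
    by simp
  ultimately show ?thesis
    using alpha_minus_partial_sum_abs_le[OF assms] by linarith
qed

lemma sum_inverse_primes_le: "(\<Sum>p | prime p \<and> p \<le> N. 1 / real p) \<le> 1 + ln (real N)"
proof (cases "N = 0")
  case False
  have "(\<Sum>p | prime p \<and> p \<le> N. 1 / real p) \<le> (\<Sum>n=1..N. 1 / real n)"
    by (rule sum_mono2) (auto simp: Suc_le_eq prime_gt_0_nat)
  also have "\<dots> = harm N"
    by (simp add: harm_def divide_inverse)
  also have "\<dots> \<le> 1 + ln (real N)"
    using euler_mascheroni_sequence_decreasing[of 1 N] False by (simp add: harm_def)
  finally show ?thesis .
qed simp

lemma mean_ln_sigma_ratio_approx: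
  assumes "0 < N"
  shows "\<bar>(1 / real N) * (\<Sum>n=1..N. ln (real (divisor_sigma n) / real n)) - const_A\<bar>
           \<le> (6 + 4 * ln (real N)) / real N"
proof -
  let ?P = "{p. prime p \<and> p \<le> N}"
  define c where "c p = (\<Sum>k<N. ln_geo_sum_diff (1 / real p) k * real (N div p ^ Suc k)) / real N" for p
  define T where "T = infsum alpha {p. prime p \<and> N < p}"
  have mean: "(1 / real N) * (\<Sum>n=1..N. ln (real (divisor_sigma n) / real n)) = (\<Sum>p\<in>?P. c p)"
    unfolding sum_ln_sigma_ratio_eq c_def by (simp add: sum_divide_distrib)
  have T: "0 \<le> T" "T \<le> 2 / real N"
    using infsum_alpha_primes_greaterThan assms by (auto simp: T_def)
  have "\<bar>(\<Sum>p\<in>?P. c p) - (\<Sum>p\<in>?P. alpha p)\<bar> \<le> (\<Sum>p\<in>?P. \<bar>c p - alpha p\<bar>)"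
    by (simp only: sum_subtractf[symmetric] sum_abs)
  also have "\<dots> \<le> (\<Sum>p\<in>?P. 4 / real N * (1 / real p))"
  proof (rule sum_mono)
    fix p assume "p \<in> ?P"
    then have "2 \<le> p"
      using prime_ge_2_nat by auto
    moreover have "4 / (real p * real N) = 4 / real N * (1 / real p)"
      by simp
    ultimately show "\<bar>c p - alpha p\<bar> \<le> 4 / real N * (1 / real p)"
      using prime_contribution_approx[OF _ assms] unfolding c_def by metis
  qed
  also have "\<dots> \<le> 4 / real N * (1 + ln (real N))"
    unfolding sum_distrib_left[symmetric] using sum_inverse_primes_le assms by (intro mult_left_mono) auto
  finally have "\<bar>(\<Sum>p\<in>?P. c p) - (\<Sum>p\<in>?P. alpha p)\<bar> \<le> 4 / real N * (1 + ln (real N))" .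
  moreover have "(6 + 4 * ln (real N)) / real N = 4 / real N * (1 + ln (real N)) + 2 / real N"
    using assms by (simp add: field_simps)
  ultimately show ?thesis
    unfolding mean const_A_eq_sum_plus_tail[of N, folded T_def] using T by linarith
qed

theorem proposition3p1:
  shows "alpha summable_on {p. prime p} \<and>
    (\<lambda>N::nat. (1 / real N) * (\<Sum>n=1..N. ln (real (divisor_sigma n) / real n)) - const_A)
      \<in> O(\<lambda>N. 1 / ln (real N))"
proof
  show "alpha summable_on {p. prime p}"
    by (rule alpha_summable_on_primes)
  have "(\<lambda>N::nat. (1 / real N) * (\<Sum>n=1..N. ln (real (divisor_sigma n) / real n)) - const_A)
      \<in> O(\<lambda>N. (6 + 4 * ln (real N)) / real N)"
    by (intro bigoI[where c = 1] eventually_mono[OF eventually_gt_at_top[of 0]])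
       (use mean_ln_sigma_ratio_approx in auto)
  also have "(\<lambda>N::nat. (6 + 4 * ln (real N)) / real N) \<in> O(\<lambda>N. 1 / ln (real N))"
    by real_asymp
  finally show "(\<lambda>N::nat. (1 / real N) * (\<Sum>n=1..N. ln (real (divisor_sigma n) / real n)) - const_A)
      \<in> O(\<lambda>N. 1 / ln (real N))" .
qed

end
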